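(* For every permutation $w$ of $\{1,\ldots,n\}$, one has $\mathrm{spec}_q\,\mathrm{wt}(w)=q^{\mathrm{inv}(w)}$, where $\mathrm{inv}(w):=|\{(i,j): i<j,\ w_i>w_j\}|$.
   Context: Work in $\mathbb{Q}(x_1,x_2,\ldots)$ with the field endomorphism $F$ given by $F(x_i)=x_{i+1}$. Define $[n]:=x_1+\cdots+x_n$, $[0]!:=1$, $[n]!:=[n]\cdot F([n-1]!)=\prod_{j=0}^{n-1}F^j[n-j]$. For a $k$-element set $S=\{i_1>\cdots>i_k\}$ of positive integers, $\mathrm{wt}(S):=\frac{\prod_{j=1}^k F^{i_j-1}[j]}{[k]!}$ ($\mathrm{wt}(\emptyset)=1$). For a permutation $w=(w_1,\ldots,w_n)$ in one-line notation, $\mathrm{wt}(w)$ is defined recursively: the empty permutation has weight $1$; otherwise let $k:=w_1-1$, $S(w):=\{i:w_i\le k\}$, $a$ the permutation of $\{1,\ldots,k\}$ listing the values $w_i\le k$ in order of increasing $i$, and $\hat b$ the permutation of $\{1,\ldots,n-k-1\}$ listing the values $w_i-k-1$ for $w_i>k+1$ in order of increasing $i$; then $\mathrm{wt}(w):=\mathrm{wt}(S(w))\,\mathrm{wt}(a)\,F^{k+1}(\mathrm{wt}(\hat b))$. The $q$-specialization $\mathrm{spec}_q$ is the substitution $x_i\mapsto q^{i-1}-q^i$ into $\mathbb{Q}(q)$ (it is defined on all the rational functions $\mathrm{wt}(w)$, whose denominators are products of sums $x_a+x_{a+1}+\cdots+x_b$, which specialize to $q^{a-1}-q^b\neq 0$).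 *)

theory Defs
  imports Main "HOL-Computational_Algebra.Polynomial" "HOL-Computational_Algebra.Fraction_Field"
begin

text \<open>An element of Q(x_1,x_2,...) built from field operations is represented by its
  evaluation map: an assignment x (with x i the value of the variable x_i, i >= 1)
  is sent to the value of the rational function.\<close>

type_synonym 'a rfun = "(nat \<Rightarrow> 'a) \<Rightarrow> 'a"

definition shiftF :: "nat \<Rightarrow> 'a rfun \<Rightarrow> 'a rfun" where
  "shiftF j f = (\<lambda>x. f (\<lambda>i. x (i + j)))"

definition qint :: "nat \<Rightarrow> 'a::field rfun" where
  "qint n = (\<lambda>x. \<Sum>i=1..n. x i)"

definition qfact :: "nat \<Rightarrow> 'a::field rfun" where
  "qfact n = (\<lambda>x. \<Prod>j<n. shiftF j (qint (n - j)) x)"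

definition wtset :: "nat set \<Rightarrow> 'a::field rfun" where
  "wtset S = (\<lambda>x. let l = rev (sorted_list_of_set S); k = length l in
     (\<Prod>j=1..k. shiftF (l ! (j - 1) - 1) (qint j) x) / qfact k x)"

text \<open>For w = v # ws we have k = v - 1, so w_i \<le> k iff w_i < v, w_i > k+1 iff w_i > v,
  and w_i - k - 1 = w_i - v.  The position of ws ! i in w is i + 2.\<close>
fun wt :: "nat list \<Rightarrow> 'a::field rfun" where
  "wt [] = (\<lambda>x. 1)"
| "wt (v # ws) = (\<lambda>x.
     wtset {i + 2 | i. i < length ws \<and> ws ! i < v} x
     * wt (filter (\<lambda>u. u < v) ws) x
     * shiftF v (wt (map (\<lambda>u. u - v) (filter (\<lambda>u. v < u) ws))) x)"

definition inv_count :: "nat list \<Rightarrow> nat" where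
  "inv_count w = card {(i, j). i < j \<and> j < length w \<and> w ! j < w ! i}"

definition qvar :: "rat poly fract" where
  "qvar = Fract [:0, 1:] 1"

text \<open>spec_q: x_i \<mapsto> q^(i-1) - q^i (value at index 0 irrelevant).\<close>
definition spec_point :: "nat \<Rightarrow> rat poly fract" where
  "spec_point i = qvar ^ (i - 1) - qvar ^ i"

end

theory Submission
  imports Defs
begin

text \<open>After the shift F^u, the specialization sends x_i to q^(i+u-1) (1 - q), so F^m [j]
  becomes q^(m+u) (1 - q^j). In wt(S) the factors 1 - q^j cancel against [k]!, leaving q to the
  power sum_(s in S) (s - 1) - k(k-1)/2. For w = v ws with c = v - 1 entries below v, this
  exponent is c plus the number of pairs (entry above v, later entry below v): exactly the
  inversions of w that do not lie inside one of the two subpermutations. Induction covers the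
  rest, with u generalized to absorb the shift F^v in front of the second one.\<close>

definition spec_from :: "nat \<Rightarrow> nat \<Rightarrow> rat poly fract" where
  "spec_from u i = spec_point (i + u)"

lemma spec_from_0 [simp]: "spec_from 0 = spec_point"
  by (simp add: spec_from_def fun_eq_iff)

lemma shiftF_spec_from: "shiftF m f (spec_from u) = f (spec_from (m + u))"
  unfolding shiftF_def spec_from_def[abs_def] by (simp add: add.assoc)

lemma qvar_nonzero: "qvar \<noteq> 0"
  by (simp add: qvar_def eq_fract Zero_fract_def)

lemma qvar_power: "qvar ^ j = Fract ([:0, 1:] ^ j) 1"
  by (induction j) (simp_all add: qvar_def mult_fract One_fract_def)

lemma qvar_power_neq_1:
  assumes "j > 0" shows "qvar ^ j \<noteq> 1"
proof
  assume "qvar ^ j = 1"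
  then have "([:0, 1:] :: rat poly) ^ j = 1"
    by (simp add: qvar_power One_fract_def eq_fract)
  then have "degree (([:0, 1:] :: rat poly) ^ j) = 0" by simp
  with assms show False by (simp add: degree_power_eq)
qed

lemma qint_spec_from: "qint j (spec_from u) = qvar ^ u * (1 - qvar ^ j)"
proof -
  have "(\<Sum>i=1..j. spec_point (i + u)) = qvar ^ u - qvar ^ (u + j)"
    by (induction j) (simp_all add: spec_point_def algebra_simps)
  then show ?thesis by (simp add: qint_def spec_from_def algebra_simps power_add)
qed

lemma qfact_spec_from:
  "qfact k (spec_from u) = qvar ^ ((\<Sum>j<k. j) + k * u) * (\<Prod>j<k. 1 - qvar ^ Suc j)"
proof -
  have "qfact k (spec_from u) = (\<Prod>j<k. qvar ^ (j + u)) * (\<Prod>j<k. 1 - qvar ^ (k - j))"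
    by (simp add: qfact_def shiftF_spec_from qint_spec_from power_add prod.distrib)
  also have "(\<Prod>j<k. 1 - qvar ^ (k - j)) = (\<Prod>j<k. 1 - qvar ^ Suc (k - Suc j))"
    by (rule prod.cong) (simp_all add: Suc_diff_Suc)
  also have "\<dots> = (\<Prod>j<k. 1 - qvar ^ Suc j)"
    by (rule prod.nat_diff_reindex)
  also have "(\<Prod>j<k. qvar ^ (j + u)) = qvar ^ (\<Sum>j<k. j + u)"
    by (simp add: power_sum)
  also have "(\<Sum>j<k. j + u) = (\<Sum>j<k. j) + k * u"
    by (simp add: sum.distrib)
  finally show ?thesis .
qed

lemma wtset_spec_from:
  assumes "finite S" "0 \<notin> S"
  shows "wtset S (spec_from u) * qvar ^ (\<Sum>j<card S. j) = qvar ^ (\<Sum>s\<in>S. s - 1)"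
proof -
  define l where "l = rev (sorted_list_of_set S)"
  define k where "k = card S"
  define D where "D = (\<Prod>j<k. 1 - qvar ^ Suc j)"
  have "distinct l" "set l = S" using assms(1) by (auto simp: l_def)
  then have "length l = k" unfolding k_def by (metis distinct_card)
  have "(\<Prod>j=1..k. shiftF (l ! (j - 1) - 1) (qint j) (spec_from u))
      = (\<Prod>j<k. qvar ^ (l ! j - 1 + u) * (1 - qvar ^ Suc j))"
    by (simp add: shiftF_spec_from qint_spec_from prod.atLeast1_atMost_eq power_add)
  also have "\<dots> = qvar ^ (\<Sum>j<k. l ! j - 1 + u) * D"
    by (simp add: prod.distrib power_sum D_def)
  also have "(\<Sum>j<k. l ! j - 1 + u) = (\<Sum>s\<in>S. s - 1) + k * u"
  proof -
    have "(\<Sum>j<k. l ! j - 1) = sum_list (map (\<lambda>s. s - 1) l)"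
      by (simp add: sum_list_sum_nth \<open>length l = k\<close> atLeast0LessThan)
    also have "\<dots> = (\<Sum>s\<in>S. s - 1)"
      using \<open>distinct l\<close> \<open>set l = S\<close> by (simp add: sum_list_distinct_conv_sum_set)
    finally show ?thesis by (simp add: sum.distrib)
  qed
  finally have numerator: "(\<Prod>j=1..k. shiftF (l ! (j - 1) - 1) (qint j) (spec_from u))
      = qvar ^ ((\<Sum>s\<in>S. s - 1) + k * u) * D" .
  have "D \<noteq> 0"
    using qvar_power_neq_1[OF zero_less_Suc] by (auto simp: D_def simp del: power_Suc)
  have denominator: "qfact k (spec_from u) = qvar ^ ((\<Sum>j<k. j) + k * u) * D"
    unfolding D_def by (rule qfact_spec_from)
  have "wtset S (spec_from u)
      = qvar ^ (\<Sum>s\<in>S. s - 1) * (qvar ^ (k * u) * D)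
        / (qvar ^ (\<Sum>j<k. j) * (qvar ^ (k * u) * D))"
    unfolding wtset_def Let_def l_def[symmetric] \<open>length l = k\<close> numerator denominator
    by (simp only: power_add mult.assoc)
  also have "\<dots> = qvar ^ (\<Sum>s\<in>S. s - 1) / qvar ^ (\<Sum>j<k. j)"
    using \<open>D \<noteq> 0\<close> qvar_nonzero by (intro nonzero_mult_divide_mult_cancel_right) simp
  finally show ?thesis using qvar_nonzero by (simp add: k_def)
qed

lemma inv_count_Nil [simp]: "inv_count [] = 0"
  by (simp add: inv_count_def)

lemma inv_count_Cons:
  "inv_count (x # xs) = length (filter (\<lambda>y. y < x) xs) + inv_count xs"
proof -
  let ?I = "{(i, j). i < j \<and> j < length xs \<and> xs ! j < xs ! i}"
  let ?J = "{j. j < length xs \<and> xs ! j < x}"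
  have split: "{(i, j). i < j \<and> j < length (x # xs) \<and> (x # xs) ! j < (x # xs) ! i}
      = Pair 0 ` Suc ` ?J \<union> map_prod Suc Suc ` ?I"
  proof (rule set_eqI)
    fix p :: "nat \<times> nat"
    obtain i j where "p = (i, j)" by fastforce
    then show "p \<in> {(i, j). i < j \<and> j < length (x # xs) \<and> (x # xs) ! j < (x # xs) ! i}
      \<longleftrightarrow> p \<in> Pair 0 ` Suc ` ?J \<union> map_prod Suc Suc ` ?I"
      by (cases i; cases j) (auto simp: image_iff)
  qed
  have "finite ?I"
    by (rule finite_subset[of _ "{..<length xs} \<times> {..<length xs}"]) auto
  then show ?thesis
    unfolding inv_count_def split
    by (subst card_Un_disjoint)
       (auto simp: card_image inj_on_def length_filter_conv_card)
qed

lemma inv_count_map: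
  assumes "strict_mono_on (set xs) f"
  shows "inv_count (map f xs) = inv_count xs"
  unfolding inv_count_def using strict_mono_on_less[OF assms] by (simp cong: conj_cong)

definition below_positions :: "nat \<Rightarrow> nat list \<Rightarrow> nat set" where
  "below_positions v xs = {i. i < length xs \<and> xs ! i < v}"

lemma finite_below_positions [simp]: "finite (below_positions v xs)"
  by (simp add: below_positions_def)

lemma card_below_positions: "card (below_positions v xs) = length (filter (\<lambda>y. y < v) xs)"
  by (simp add: below_positions_def length_filter_conv_card)

lemma sum_below_positions_Cons:
  "\<Sum>(below_positions v (x # xs)) = \<Sum>(below_positions v xs) + length (filter (\<lambda>y. y < v) xs)"
proof -
  have "below_positions v (x # xs) - {i. i = 0} = Suc ` below_positions v xs"
  proof (rule set_eqI)
    fix i show "i \<in> below_positions v (x # xs) - {i. i = 0} \<longleftrightarrow> i \<in> Suc ` below_positions v xs"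
      by (cases i) (auto simp: below_positions_def)
  qed
  then have "\<Sum>(below_positions v (x # xs)) = \<Sum>(Suc ` below_positions v xs)"
    using sum.setdiff_irrelevant[of "below_positions v (x # xs)" "\<lambda>i. i"] by simp
  also have "\<dots> = (\<Sum>i\<in>below_positions v xs. Suc i)"
    by (simp add: sum.reindex)
  finally show ?thesis by (simp add: sum_Suc card_below_positions)
qed

lemma length_filter_less_split:
  fixes xs :: "'a::linorder list"
  assumes "v < x" "v \<notin> set xs"
  shows "length (filter (\<lambda>y. y < x) xs)
    = length (filter (\<lambda>y. y < v) xs) + length (filter (\<lambda>y. y < x) (filter (\<lambda>y. v < y) xs))"
  using assms
proof (induction xs)
  case (Cons a xs)
  then have "a \<noteq> v" by auto
  then consider "a < v" | "v < a" by (rule linorder_neqE)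
  then show ?case using Cons by cases auto
qed simp

text \<open>Subtracting 0 + 1 + ... + (c - 1) from the sum of the positions of the c entries below v
  counts the pairs of an entry above v followed by an entry below v.\<close>

lemma inv_count_split_at:
  assumes "v \<notin> set ws"
  shows "inv_count ws + (\<Sum>j<length (filter (\<lambda>y. y < v) ws). j)
    = \<Sum>(below_positions v ws) + inv_count (filter (\<lambda>y. y < v) ws)
      + inv_count (filter (\<lambda>y. v < y) ws)"
  using assms
proof (induction ws)
  case Nil
  then show ?case by (simp add: below_positions_def)
next
  case (Cons x ws)
  then have "x \<noteq> v" "v \<notin> set ws" by auto
  show ?case
  proof (cases "x < v")
    case True
    then have "filter (\<lambda>y. y < x) (filter (\<lambda>y. y < v) ws) = filter (\<lambda>y. y < x) ws"
      by (auto intro: filter_cong)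
    with True Cons \<open>v \<notin> set ws\<close> show ?thesis
      by (simp add: inv_count_Cons sum_below_positions_Cons)
  next
    case False
    with \<open>x \<noteq> v\<close> have "v < x" by simp
    with Cons \<open>v \<notin> set ws\<close> show ?thesis
      by (simp add: inv_count_Cons sum_below_positions_Cons length_filter_less_split)
  qed
qed

lemma perm_Cons_filter_below:
  fixes ws :: "nat list"
  assumes "distinct (v # ws)" "set (v # ws) = {1..length (v # ws)}"
  defines "a \<equiv> filter (\<lambda>y. y < v) ws"
  shows "distinct a" "set a = {1..length a}"
proof -
  let ?n = "Suc (length ws)"
  have "insert v (set ws) = {1..?n}" "v \<notin> set ws" using assms(1,2) by simp_all
  then have mem: "y \<in> set ws \<longleftrightarrow> y \<in> {1..?n} \<and> y \<noteq> v" for y by blast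
  have "v \<in> {1..?n}" using \<open>insert v (set ws) = {1..?n}\<close> by blast
  have "set a = {1..<v}"
  proof (rule set_eqI)
    fix y show "y \<in> set a \<longleftrightarrow> y \<in> {1..<v}" using mem[of y] \<open>v \<in> {1..?n}\<close> by (auto simp: a_def)
  qed
  moreover show "distinct a" using assms(1) by (simp add: a_def)
  ultimately have "length a = v - 1" by (metis card_atLeastLessThan distinct_card)
  moreover have "{1..<v} = {1..v - 1}"
    using \<open>v \<in> {1..?n}\<close> atLeastLessThanSuc_atLeastAtMost[of 1 "v - 1"] by simp
  ultimately show "set a = {1..length a}" using \<open>set a = {1..<v}\<close> by simp
qed

lemma perm_Cons_filter_above:
  fixes ws :: "nat list"
  assumes "distinct (v # ws)" "set (v # ws) = {1..length (v # ws)}"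
  defines "b \<equiv> map (\<lambda>y. y - v) (filter (\<lambda>y. v < y) ws)"
  shows "distinct b" "set b = {1..length b}"
proof -
  let ?n = "Suc (length ws)"
  have "insert v (set ws) = {1..?n}" "v \<notin> set ws" using assms(1,2) by simp_all
  then have mem: "y \<in> set ws \<longleftrightarrow> y \<in> {1..?n} \<and> y \<noteq> v" for y by blast
  have "v \<in> {1..?n}" using \<open>insert v (set ws) = {1..?n}\<close> by blast
  have "set (filter (\<lambda>y. v < y) ws) = (\<lambda>i. i + v) ` {1..?n - v}"
  proof (rule set_eqI)
    fix y
    have "y \<in> (\<lambda>i. i + v) ` {1..?n - v} \<longleftrightarrow> v < y \<and> y \<le> ?n"
      using \<open>v \<in> {1..?n}\<close> by (auto simp: image_iff intro: bexI[of _ "y - v"])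
    then show "y \<in> set (filter (\<lambda>y. v < y) ws) \<longleftrightarrow> y \<in> (\<lambda>i. i + v) ` {1..?n - v}"
      using mem[of y] by auto
  qed
  then have "set b = (\<lambda>y. y - v) ` (\<lambda>i. i + v) ` {1..?n - v}"
    by (simp only: b_def set_map)
  also have "\<dots> = {1..?n - v}" by (simp only: image_image add_diff_cancel_right' image_ident)
  finally have "set b = {1..?n - v}" .
  have "inj_on (\<lambda>y. y - v) (set (filter (\<lambda>y. v < y) ws))"
    by (auto simp: inj_on_def)
  then show "distinct b" using assms(1) by (simp add: b_def distinct_map)
  then have "length b = ?n - v" using \<open>set b = {1..?n - v}\<close> by (metis card_atLeastAtMost diff_Suc_1 distinct_card)
  with \<open>set b = {1..?n - v}\<close> show "set b = {1..length b}" by simp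
qed

lemma wt_Cons_spec_from:
  "wt (v # ws) (spec_from u) =
     wtset ((\<lambda>i. i + 2) ` below_positions v ws) (spec_from u)
     * wt (filter (\<lambda>y. y < v) ws) (spec_from u)
     * wt (map (\<lambda>y. y - v) (filter (\<lambda>y. v < y) ws)) (spec_from (v + u))"
proof -
  have "{i + 2 |i. i < length ws \<and> ws ! i < v} = (\<lambda>i. i + 2) ` below_positions v ws"
    by (auto simp: below_positions_def)
  then show ?thesis by (simp add: shiftF_spec_from)
qed

lemma wtset_below_positions_spec_from:
  "wtset ((\<lambda>i. i + 2) ` below_positions v ws) (spec_from u)
     * qvar ^ (\<Sum>j<length (filter (\<lambda>y. y < v) ws). j)
   = qvar ^ (\<Sum>(below_positions v ws) + length (filter (\<lambda>y. y < v) ws))"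
proof -
  let ?B = "below_positions v ws"
  have "inj_on (\<lambda>i. i + 2) ?B" by (simp add: inj_on_def)
  then have "card ((\<lambda>i. i + 2) ` ?B) = length (filter (\<lambda>y. y < v) ws)"
    "(\<Sum>s\<in>(\<lambda>i. i + 2) ` ?B. s - 1) = (\<Sum>i\<in>?B. Suc i)"
    by (simp_all add: card_image card_below_positions sum.reindex)
  moreover have "0 \<notin> (\<lambda>i. i + 2) ` ?B" by auto
  ultimately show ?thesis
    using wtset_spec_from[of "(\<lambda>i. i + 2) ` ?B" u] by (simp add: sum_Suc card_below_positions)
qed

lemma wt_perm_spec_from:
  assumes "distinct w" "set w = {1..length w}"
  shows "wt w (spec_from u) = qvar ^ inv_count w"
  using assms
proof (induction "length w" arbitrary: w u rule: less_induct)
  case less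
  show ?case
  proof (cases w)
    case Nil
    then show ?thesis by simp
  next
    case (Cons v ws)
    define a where "a = filter (\<lambda>y. y < v) ws"
    define above where "above = filter (\<lambda>y. v < y) ws"
    define C where "C = (\<Sum>j<length a. j)"
    have "v \<notin> set ws" using less.prems Cons by simp
    have IH_below: "wt a (spec_from u) = qvar ^ inv_count a"
      using less.hyps[of a] perm_Cons_filter_below[of v ws] less.prems Cons
      by (simp add: a_def le_imp_less_Suc)
    have "strict_mono_on (set above) (\<lambda>y. y - v)"
      by (auto simp: above_def strict_mono_on_def)
    then have IH_above: "wt (map (\<lambda>y. y - v) above) (spec_from (v + u)) = qvar ^ inv_count above"
      using less.hyps[of "map (\<lambda>y. y - v) above"] perm_Cons_filter_above[of v ws] less.prems Cons
      by (simp add: above_def inv_count_map le_imp_less_Suc)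
    have "wt w (spec_from u) * qvar ^ C
        = (wtset ((\<lambda>i. i + 2) ` below_positions v ws) (spec_from u) * qvar ^ C)
          * wt a (spec_from u) * wt (map (\<lambda>y. y - v) above) (spec_from (v + u))"
      unfolding Cons wt_Cons_spec_from a_def above_def by (simp only: ac_simps)
    also have "\<dots> = qvar ^ (\<Sum>(below_positions v ws) + length a + inv_count a + inv_count above)"
      unfolding IH_below IH_above C_def wtset_below_positions_spec_from[of v ws u, folded a_def]
      by (simp only: power_add)
    also have "\<Sum>(below_positions v ws) + length a + inv_count a + inv_count above = inv_count w + C"
      using inv_count_split_at[OF \<open>v \<notin> set ws\<close>]
      by (simp add: Cons inv_count_Cons a_def above_def C_def)
    also have "qvar ^ (inv_count w + C) = qvar ^ inv_count w * qvar ^ C"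
      by (rule power_add)
    finally show ?thesis using qvar_nonzero by simp
  qed
qed

theorem corollary5p4:
  fixes w :: "nat list"
  assumes "distinct w" and "set w = {1..length w}"
  shows "wt w spec_point = qvar ^ inv_count w"
  using wt_perm_spec_from[OF assms, of 0] by simp

end
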